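(* For every $\varepsilon>0$ there exists $n(\varepsilon)$ such that for all $n>n(\varepsilon)$, $$7-\varepsilon\ \le\ \mathrm{ifcov}(G_{n\times n})\ \le\ \frac{213}{25}=8.52,$$ where $G_{n\times n}$ is the $n\times n$ square grid graph.
   Context: For a graph $G$ and a function $D:V(G)\to\mathbb{N}$ (an integer pebble distribution, of size $|D|=\sum_v D(v)$), the weight function is $W_D(u)=\sum_{v\in V(G)}D(v)2^{-d(u,v)}$, where $d$ denotes graph distance. The optimal integer fractional covering ratio of $G$ is $$\mathrm{ifcov}(G)=\frac{|V(G)|}{\min\{|D| : D:V(G)\to\mathbb{N},\ W_D(u)\ge 1 \text{ for all } u\in V(G)\}},$$ i.e. the number of vertices divided by the minimum size of an integer distribution covering every vertex in the fractional sense. $G_{n\times n}$ is the Cartesian product of two paths on $n$ vertices. *)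

theory Defs
  imports "HOL-Analysis.Analysis"
begin

text \<open>A (finite, simple, undirected) graph is given by a vertex set V and an edge set
E of ordered pairs (assumed symmetric).\<close>

definition graph_dist :: "('a \<times> 'a) set \<Rightarrow> 'a \<Rightarrow> 'a \<Rightarrow> nat" where
  "graph_dist E u v = (LEAST k. (u, v) \<in> E ^^ k)"

definition weight :: "'a set \<Rightarrow> ('a \<times> 'a) set \<Rightarrow> ('a \<Rightarrow> nat) \<Rightarrow> 'a \<Rightarrow> real" where
  "weight V E D u = (\<Sum>v\<in>V. real (D v) * (1/2) ^ graph_dist E u v)"

definition covers :: "'a set \<Rightarrow> ('a \<times> 'a) set \<Rightarrow> ('a \<Rightarrow> nat) \<Rightarrow> bool" where
  "covers V E D \<longleftrightarrow> (\<forall>u\<in>V. weight V E D u \<ge> 1)"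

text \<open>Minimum size |D| = sum_v D(v) of a covering integer distribution
(distributions are functions on V; values outside V are irrelevant).\<close>
definition min_cover_size :: "'a set \<Rightarrow> ('a \<times> 'a) set \<Rightarrow> nat" where
  "min_cover_size V E = (LEAST s. \<exists>D. covers V E D \<and> (\<Sum>v\<in>V. D v) = s)"

definition ifcov :: "'a set \<Rightarrow> ('a \<times> 'a) set \<Rightarrow> real" where
  "ifcov V E = real (card V) / real (min_cover_size V E)"

definition grid_V :: "nat \<Rightarrow> (nat \<times> nat) set" where
  "grid_V n = {0..<n} \<times> {0..<n}"

definition grid_E :: "nat \<Rightarrow> ((nat \<times> nat) \<times> (nat \<times> nat)) set" where
  "grid_E n = {((i, j), (i', j')). (i, j) \<in> grid_V n \<and> (i', j') \<in> grid_V n \<and>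
      ((i = i' \<and> (j' = j + 1 \<or> j = j' + 1)) \<or> (j = j' \<and> (i' = i + 1 \<or> i = i' + 1)))}"

end

theory Submission
  imports Defs
begin

text \<open>
The bound \<open>ifcov \<le> 213/25\<close>: sum the inequalities \<open>W_D(u) \<ge> 1\<close> over all \<open>n^2\<close> vertices and exchange
the sums.  A pebble at \<open>v\<close> then contributes \<open>\<Sum>_u 2^(-d(u,v))\<close>, a product of two one-dimensional
geometric sums, which is at most \<open>3 \<cdot> 3 = 9\<close> for an interior vertex and at most \<open>2 \<cdot> 3 = 6\<close> on the
boundary.  For an interior vertex \<open>v\<close> the four diagonal neighbours must be covered too; each of
them sees any pebble at most \<open>25/4\<close> times as strongly as \<open>v\<close> does, and sees a pebble at \<open>v\<close> itself
with total weight 1, which forces the excess \<open>W_D(v) - 1\<close> to be at least \<open>12/25 \<cdot> D(v)\<close>.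
Discounting these excesses leaves \<open>9 - 12/25 = 213/25\<close> per pebble.

The bound \<open>ifcov \<ge> 7 - \<epsilon>\<close>: put a pebble on every vertex \<open>(i, j)\<close> with \<open>i + 2j \<equiv> 0 (mod 7)\<close>, a
perfect code of the infinite grid, and on the five outermost rows and columns.  Every other vertex
sees lattice points at distances whose weights \<open>2^(-d)\<close> add up to at least 1, and the distribution
has \<open>n^2/7 + O(n)\<close> pebbles.
\<close>

section \<open>Distances in the grid\<close>

definition absdiff :: "nat \<Rightarrow> nat \<Rightarrow> nat" where
  "absdiff a b = (a - b) + (b - a)"

lemma absdiff_self [simp]: "absdiff a a = 0"
  by (simp add: absdiff_def)

lemma absdiff_triangle: "absdiff a c \<le> absdiff a b + absdiff b c"
  by (simp add: absdiff_def)

lemma grid_E_absdiff: "((a, b), (c, d)) \<in> grid_E n \<Longrightarrow> absdiff a c + absdiff b d = 1"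
  by (auto simp: grid_E_def absdiff_def)

lemma grid_E_relpow_imp_absdiff_le:
  "((a, b), (c, d)) \<in> grid_E n ^^ k \<Longrightarrow> absdiff a c + absdiff b d \<le> k"
proof (induction k arbitrary: c d)
  case 0
  then show ?case by simp
next
  case (Suc k)
  then obtain y where walk: "((a, b), y) \<in> grid_E n ^^ k" and edge: "(y, (c, d)) \<in> grid_E n"
    by (meson relpow_Suc_E)
  obtain e f where y: "y = (e, f)" by (cases y)
  have "absdiff a e + absdiff b f \<le> k" using Suc.IH walk y by blast
  moreover have "absdiff e c + absdiff f d = 1" using edge y by (simp add: grid_E_absdiff)
  ultimately show ?case
    using absdiff_triangle[of a c e] absdiff_triangle[of b d f] by linarith
qed

lemma grid_E_relpow_absdiff:
  assumes "a < n" "b < n" "c < n" "d < n"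
  shows "((a, b), (c, d)) \<in> grid_E n ^^ (absdiff a c + absdiff b d)"
  using assms
proof (induction "absdiff a c + absdiff b d" arbitrary: a b)
  case 0
  then show ?case by (simp add: absdiff_def)
next
  case (Suc k)
  show ?case
  proof (cases "a = c")
    case False
    define a' where "a' = (if a < c then a + 1 else a - 1)"
    have edge: "((a, b), (a', b)) \<in> grid_E n"
      using False Suc.prems by (auto simp: a'_def grid_E_def grid_V_def)
    have k: "k = absdiff a' c + absdiff b d"
      using Suc.hyps(2) False by (auto simp: a'_def absdiff_def)
    have "((a', b), (c, d)) \<in> grid_E n ^^ k"
      using Suc.hyps(1)[OF k] Suc.prems False k by (auto simp: a'_def)
    then show ?thesis using edge Suc.hyps(2) relpow_Suc_I2 by metis
  next
    case True
    then have "b \<noteq> d" using Suc.hyps(2) by (auto simp: absdiff_def)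
    define b' where "b' = (if b < d then b + 1 else b - 1)"
    have edge: "((a, b), (a, b')) \<in> grid_E n"
      using \<open>b \<noteq> d\<close> Suc.prems by (auto simp: b'_def grid_E_def grid_V_def)
    have k: "k = absdiff a c + absdiff b' d"
      using Suc.hyps(2) \<open>b \<noteq> d\<close> by (auto simp: b'_def absdiff_def)
    have "((a, b'), (c, d)) \<in> grid_E n ^^ k"
      using Suc.hyps(1)[OF k] Suc.prems \<open>b \<noteq> d\<close> k by (auto simp: b'_def)
    then show ?thesis using edge Suc.hyps(2) relpow_Suc_I2 by metis
  qed
qed

lemma graph_dist_grid:
  assumes "a < n" "b < n" "c < n" "d < n"
  shows "graph_dist (grid_E n) (a, b) (c, d) = absdiff a c + absdiff b d"
  unfolding graph_dist_def
  by (rule Least_equality) (use assms in \<open>auto intro: grid_E_relpow_absdiff grid_E_relpow_imp_absdiff_le\<close>)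

definition grid_decay :: "nat \<times> nat \<Rightarrow> nat \<times> nat \<Rightarrow> real" where
  "grid_decay u w = (1/2) ^ (absdiff (fst u) (fst w) + absdiff (snd u) (snd w))"

lemma grid_decay_self [simp]: "grid_decay u u = 1"
  by (simp add: grid_decay_def)

lemma grid_decay_nonneg: "grid_decay u w \<ge> 0"
  by (simp add: grid_decay_def)

lemma finite_grid_V [simp]: "finite (grid_V n)"
  by (simp add: grid_V_def)

lemma card_grid_V: "card (grid_V n) = n * n"
  by (simp add: grid_V_def)

lemma weight_grid:
  assumes "u \<in> grid_V n"
  shows "weight (grid_V n) (grid_E n) D u = (\<Sum>w\<in>grid_V n. real (D w) * grid_decay u w)"
  unfolding weight_def
  by (rule sum.cong) (use assms in \<open>auto simp: grid_V_def graph_dist_grid grid_decay_def\<close>)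

lemma weight_grid_ge_subset_sum:
  assumes "u \<in> grid_V n" "S \<subseteq> grid_V n"
  shows "(\<Sum>w\<in>S. real (D w) * grid_decay u w) \<le> weight (grid_V n) (grid_E n) D u"
  unfolding weight_grid[OF assms(1)]
  by (rule sum_mono2) (use assms(2) in \<open>auto simp: grid_decay_nonneg\<close>)

section \<open>Every covering has at least \<open>25/213 \<cdot> n\<^sup>2\<close> pebbles\<close>

lemma sum_atMost_half_power_diff: "(\<Sum>i\<le>a. (1/2::real) ^ (a - i)) = 2 - (1/2) ^ a"
proof (induction a)
  case (Suc a)
  have "(\<Sum>i\<le>a. (1/2::real) ^ (Suc a - i)) = (1/2) * (\<Sum>i\<le>a. (1/2) ^ (a - i))"
    by (simp add: sum_distrib_left Suc_diff_le)
  then show ?case using Suc by simp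
qed simp

lemma sum_greaterThan_half_power_diff:
  "Suc a \<le> n \<Longrightarrow> (\<Sum>i\<in>{Suc a..<n}. (1/2::real) ^ (i - a)) = 1 - (1/2) ^ (n - 1 - a)"
proof (induction rule: dec_induct)
  case (step m)
  have "m - a = Suc (m - 1 - a)" using step by auto
  then have "(1::real) - (1/2) ^ (m - 1 - a) + (1/2) ^ (m - a) = 1 - (1/2) ^ (m - a)"
    by simp
  then show ?case using step by simp
qed simp

lemma line_decay_sum_le:
  assumes "a < n"
  shows "(\<Sum>i<n. (1/2::real) ^ absdiff i a) \<le> 3 - (1/2) ^ a - (1/2) ^ (n - 1 - a)"
proof -
  have split: "{..<n} = {..a} \<union> {Suc a..<n}" using assms by auto
  have "(\<Sum>i<n. (1/2::real) ^ absdiff i a)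
      = (\<Sum>i\<le>a. (1/2) ^ absdiff i a) + (\<Sum>i\<in>{Suc a..<n}. (1/2) ^ absdiff i a)"
    unfolding split by (rule sum.union_disjoint) auto
  also have "\<dots> = (\<Sum>i\<le>a. (1/2) ^ (a - i)) + (\<Sum>i\<in>{Suc a..<n}. (1/2) ^ (i - a))"
    by (intro arg_cong2[where f = "(+)"] sum.cong) (auto simp: absdiff_def)
  finally show ?thesis
    using sum_atMost_half_power_diff[of a] sum_greaterThan_half_power_diff[of a n] assms by simp
qed

lemma line_decay_sum_le_3: "a < n \<Longrightarrow> (\<Sum>i<n. (1/2::real) ^ absdiff i a) \<le> 3"
  using line_decay_sum_le[of a n] zero_le_power[of "1/2::real" a] zero_le_power[of "1/2::real" "n - 1 - a"]
  by linarith

lemma line_decay_sum_le_2_at_end: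
  assumes "a < n" "a = 0 \<or> a = n - 1"
  shows "(\<Sum>i<n. (1/2::real) ^ absdiff i a) \<le> 2"
proof -
  have "(1/2::real) ^ a = 1 \<or> (1/2::real) ^ (n - 1 - a) = 1" using assms by auto
  then show ?thesis
    using line_decay_sum_le[OF assms(1)] zero_le_power[of "1/2::real" a]
      zero_le_power[of "1/2::real" "n - 1 - a"]
    by linarith
qed

lemma sum_cartesian_product_mult:
  "(\<Sum>(x, y)\<in>A \<times> B. f x * g y) = sum f A * (sum g B :: 'c :: comm_semiring_0)"
  by (simp add: sum_product sum.cartesian_product)

lemma grid_decay_sum:
  "(\<Sum>u\<in>grid_V n. grid_decay u w) = (\<Sum>i<n. (1/2) ^ absdiff i (fst w)) * (\<Sum>j<n. (1/2) ^ absdiff j (snd w))"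
  using sum_cartesian_product_mult[of "\<lambda>i. (1/2::real) ^ absdiff i (fst w)"
      "\<lambda>j. (1/2) ^ absdiff j (snd w)" "{0..<n}" "{0..<n}"]
  by (simp add: grid_V_def grid_decay_def power_add case_prod_beta' atLeast0LessThan)

definition grid_interior :: "nat \<Rightarrow> (nat \<times> nat) set" where
  "grid_interior n = {1..<n - 1} \<times> {1..<n - 1}"

lemma grid_decay_sum_le_9:
  assumes "w \<in> grid_V n"
  shows "(\<Sum>u\<in>grid_V n. grid_decay u w) \<le> 9"
proof -
  have "fst w < n" "snd w < n" using assms by (auto simp: grid_V_def)
  then have "(\<Sum>i<n. (1/2::real) ^ absdiff i (fst w)) * (\<Sum>j<n. (1/2) ^ absdiff j (snd w)) \<le> 3 * 3"
    by (intro mult_mono line_decay_sum_le_3 sum_nonneg) auto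
  then show ?thesis by (simp add: grid_decay_sum)
qed

lemma grid_decay_sum_le_6_off_interior:
  assumes "w \<in> grid_V n" "w \<notin> grid_interior n"
  shows "(\<Sum>u\<in>grid_V n. grid_decay u w) \<le> 6"
proof -
  have lt: "fst w < n" "snd w < n" using assms(1) by (auto simp: grid_V_def)
  moreover have "\<not> (1 \<le> fst w \<and> fst w < n - 1 \<and> 1 \<le> snd w \<and> snd w < n - 1)"
    using assms(2) by (cases w) (simp add: grid_interior_def)
  ultimately consider "fst w = 0 \<or> fst w = n - 1" | "snd w = 0 \<or> snd w = n - 1"
    by linarith
  then have "(\<Sum>i<n. (1/2::real) ^ absdiff i (fst w)) * (\<Sum>j<n. (1/2) ^ absdiff j (snd w)) \<le> 6"
  proof cases
    case 1
    then have "(\<Sum>i<n. (1/2::real) ^ absdiff i (fst w)) * (\<Sum>j<n. (1/2) ^ absdiff j (snd w)) \<le> 2 * 3"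
      using lt by (intro mult_mono line_decay_sum_le_3 line_decay_sum_le_2_at_end sum_nonneg) auto
    then show ?thesis by simp
  next
    case 2
    then have "(\<Sum>i<n. (1/2::real) ^ absdiff i (fst w)) * (\<Sum>j<n. (1/2) ^ absdiff j (snd w)) \<le> 3 * 2"
      using lt by (intro mult_mono line_decay_sum_le_3 line_decay_sum_le_2_at_end sum_nonneg) auto
    then show ?thesis by simp
  qed
  then show ?thesis by (simp add: grid_decay_sum)
qed

definition diagonal_neighbours :: "nat \<times> nat \<Rightarrow> (nat \<times> nat) set" where
  "diagonal_neighbours v = {fst v - 1, fst v + 1} \<times> {snd v - 1, snd v + 1}"

lemma half_power_absdiff_pair_le:
  assumes "1 \<le> c"
  shows "(1/2::real) ^ absdiff (c - 1) x + (1/2) ^ absdiff (c + 1) x \<le> 5/2 * (1/2) ^ absdiff c x"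
proof -
  consider "x = c" | k where "c = x + Suc k" | k where "x = c + Suc k"
    by (metis add_Suc_right less_imp_Suc_add linorder_neqE_nat)
  then show ?thesis
  proof cases
    case 2
    then have "absdiff (c - 1) x = k" "absdiff (c + 1) x = k + 2" "absdiff c x = k + 1"
      by (auto simp: absdiff_def)
    then show ?thesis by simp
  next
    case 3
    then have "absdiff (c - 1) x = k + 2" "absdiff (c + 1) x = k" "absdiff c x = k + 1"
      using assms by (auto simp: absdiff_def)
    then show ?thesis by simp
  qed (use assms in \<open>simp add: absdiff_def\<close>)
qed

lemma diagonal_neighbours_decay_sum:
  assumes "1 \<le> a" "1 \<le> b"
  shows "(\<Sum>y\<in>diagonal_neighbours (a, b). grid_decay y w)
    = ((1/2) ^ absdiff (a - 1) (fst w) + (1/2) ^ absdiff (a + 1) (fst w))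
      * ((1/2) ^ absdiff (b - 1) (snd w) + (1/2) ^ absdiff (b + 1) (snd w))"
  using sum_cartesian_product_mult[of "\<lambda>i. (1/2::real) ^ absdiff i (fst w)"
      "\<lambda>j. (1/2) ^ absdiff j (snd w)" "{a - 1, a + 1}" "{b - 1, b + 1}"] assms
  by (simp add: diagonal_neighbours_def grid_decay_def power_add case_prod_beta')

lemma diagonal_neighbours_decay_sum_le:
  assumes "1 \<le> a" "1 \<le> b"
  shows "(\<Sum>y\<in>diagonal_neighbours (a, b). grid_decay y w) \<le> 25/4 * grid_decay (a, b) w"
proof -
  have "(\<Sum>y\<in>diagonal_neighbours (a, b). grid_decay y w)
      \<le> (5/2 * (1/2) ^ absdiff a (fst w)) * (5/2 * (1/2) ^ absdiff b (snd w))"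
    unfolding diagonal_neighbours_decay_sum[OF assms]
    by (intro mult_mono half_power_absdiff_pair_le assms) auto
  then show ?thesis by (simp add: grid_decay_def power_add)
qed

lemma diagonal_neighbours_decay_sum_self:
  "1 \<le> a \<Longrightarrow> 1 \<le> b \<Longrightarrow> (\<Sum>y\<in>diagonal_neighbours (a, b). grid_decay y (a, b)) = 1"
  by (simp add: diagonal_neighbours_decay_sum absdiff_def)

lemma interior_weight_excess:
  assumes cov: "covers (grid_V n) (grid_E n) D" and v: "v \<in> grid_interior n"
  shows "weight (grid_V n) (grid_E n) D v - 1 \<ge> 12/25 * real (D v)"
proof -
  let ?V = "grid_V n" and ?W = "weight (grid_V n) (grid_E n) D"
  obtain a b where ab: "v = (a, b)" "1 \<le> a" "a + 1 < n" "1 \<le> b" "b + 1 < n"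
    using v by (cases v) (auto simp: grid_interior_def)
  define K where "K w = (\<Sum>y\<in>diagonal_neighbours v. grid_decay y w)" for w
  have vV: "v \<in> ?V" using ab by (auto simp: grid_V_def)
  have diagV: "diagonal_neighbours v \<subseteq> ?V" using ab by (auto simp: diagonal_neighbours_def grid_V_def)
  have "card (diagonal_neighbours v) = 4"
    using ab unfolding diagonal_neighbours_def card_cartesian_product by simp
  then have "4 \<le> (\<Sum>y\<in>diagonal_neighbours v. ?W y)"
    using sum_mono[of "diagonal_neighbours v" "\<lambda>_. 1" ?W] cov diagV by (force simp: covers_def)
  also have "\<dots> = (\<Sum>y\<in>diagonal_neighbours v. \<Sum>w\<in>?V. real (D w) * grid_decay y w)"
    using diagV by (intro sum.cong) (auto simp: weight_grid)
  also have "\<dots> = (\<Sum>w\<in>?V. real (D w) * K w)"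
    unfolding K_def sum_distrib_left by (rule sum.swap)
  also have "\<dots> = real (D v) * K v + (\<Sum>w\<in>?V - {v}. real (D w) * K w)"
    by (rule sum.remove[OF finite_grid_V vV])
  also have "\<dots> \<le> real (D v) + (\<Sum>w\<in>?V - {v}. real (D w) * (25/4 * grid_decay v w))"
  proof -
    have "K v = 1" using diagonal_neighbours_decay_sum_self[OF ab(2,4)] by (simp add: K_def ab(1))
    moreover have "(\<Sum>w\<in>?V - {v}. real (D w) * K w)
        \<le> (\<Sum>w\<in>?V - {v}. real (D w) * (25/4 * grid_decay v w))"
      using diagonal_neighbours_decay_sum_le[OF ab(2,4)]
      by (intro sum_mono mult_left_mono) (simp_all add: K_def ab(1))
    ultimately show ?thesis by simp
  qed
  also have "\<dots> = real (D v) + 25/4 * (?W v - real (D v))"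
    using sum.remove[OF finite_grid_V vV, of "\<lambda>w. real (D w) * grid_decay v w"]
    by (simp add: weight_grid[OF vV] sum_distrib_left algebra_simps)
  finally have "16 + 21 * real (D v) \<le> 25 * ?W v" by (simp add: field_simps)
  moreover have "?W v \<ge> 1" using cov vV by (simp add: covers_def)
  ultimately show ?thesis by (cases "D v = 0") auto
qed

theorem grid_cover_size_ge:
  assumes cov: "covers (grid_V n) (grid_E n) D"
  shows "real (n * n) \<le> 213/25 * real (\<Sum>v\<in>grid_V n. D v)"
proof -
  let ?V = "grid_V n" and ?W = "weight (grid_V n) (grid_E n) D"
  define excess where "excess u = (if u \<in> grid_interior n then ?W u - 1 else 0)" for u
  have per_pebble: "real (D v) * (\<Sum>u\<in>?V. grid_decay u v) \<le> 213/25 * real (D v) + excess v"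
    if "v \<in> ?V" for v
  proof (cases "v \<in> grid_interior n")
    case True
    have "real (D v) * (\<Sum>u\<in>?V. grid_decay u v) \<le> real (D v) * 9"
      using grid_decay_sum_le_9[OF that] by (rule mult_left_mono) simp
    then show ?thesis using interior_weight_excess[OF cov True] True by (simp add: excess_def)
  next
    case False
    have "real (D v) * (\<Sum>u\<in>?V. grid_decay u v) \<le> real (D v) * 6"
      using grid_decay_sum_le_6_off_interior[OF that False] by (rule mult_left_mono) simp
    then show ?thesis using False by (simp add: excess_def)
  qed
  have "real (n * n) = (\<Sum>u\<in>?V. 1)" by (simp add: card_grid_V)
  also have "\<dots> \<le> (\<Sum>u\<in>?V. ?W u - excess u)"
    by (rule sum_mono) (use cov in \<open>auto simp: covers_def excess_def\<close>)
  also have "\<dots> = (\<Sum>u\<in>?V. \<Sum>v\<in>?V. real (D v) * grid_decay u v) - (\<Sum>u\<in>?V. excess u)"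
    by (simp add: sum_subtractf weight_grid)
  also have "\<dots> = (\<Sum>v\<in>?V. real (D v) * (\<Sum>u\<in>?V. grid_decay u v)) - (\<Sum>u\<in>?V. excess u)"
    unfolding sum_distrib_left by (subst sum.swap) (rule refl)
  also have "\<dots> \<le> (\<Sum>v\<in>?V. 213/25 * real (D v) + excess v) - (\<Sum>u\<in>?V. excess u)"
    using sum_mono[OF per_pebble] by simp
  also have "\<dots> = 213/25 * real (\<Sum>v\<in>?V. D v)"
    by (simp add: sum.distrib sum_distrib_left)
  finally show ?thesis .
qed

section \<open>A covering with \<open>n\<^sup>2/7 + O(n)\<close> pebbles\<close>

definition grid_lattice7 :: "nat \<Rightarrow> (nat \<times> nat) set" where
  "grid_lattice7 n = {v \<in> grid_V n. (fst v + 2 * snd v) mod 7 = 0}"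

definition grid_border :: "nat \<Rightarrow> nat \<Rightarrow> (nat \<times> nat) set" where
  "grid_border w n = {v \<in> grid_V n. fst v < w \<or> snd v < w \<or> n \<le> fst v + w \<or> n \<le> snd v + w}"

definition lattice_cover :: "nat \<Rightarrow> nat \<times> nat \<Rightarrow> nat" where
  "lattice_cover n v = of_bool (v \<in> grid_lattice7 n \<union> grid_border 5 n)"

lemma mod_add_right_cancel_nat:
  fixes a b c m :: nat
  assumes "(a + c) mod m = (b + c) mod m"
  shows "a mod m = b mod m"
proof (cases "b \<le> a")
  case True
  then show ?thesis using assms by (simp add: mod_eq_dvd_iff_nat)
next
  case False
  then have "b mod m = a mod m" using assms[symmetric] by (simp add: mod_eq_dvd_iff_nat)
  then show ?thesis by simp
qed

lemma card_residue_class_lessThan_le: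
  "card {i \<in> {..<n}. (i + c) mod m = (0::nat)} \<le> n div m + 1"
proof -
  let ?S = "{i \<in> {..<n}. (i + c) mod m = 0}"
  have inj: "inj_on (\<lambda>i. i div m) ?S"
  proof (rule inj_onI)
    fix i j assume "i \<in> ?S" "j \<in> ?S" and div_eq: "i div m = j div m"
    then have mod_eq: "i mod m = j mod m"
      using mod_add_right_cancel_nat[of i c m j] by simp
    have "i = i div m * m + i mod m" by simp
    also have "\<dots> = j" using div_eq mod_eq by simp
    finally show "i = j" .
  qed
  have image: "(\<lambda>i. i div m) ` ?S \<subseteq> {..n div m}"
    by (auto intro: div_le_mono)
  have "card ?S \<le> card {..n div m}"
    by (rule card_inj_on_le[OF inj image]) simp
  then show ?thesis by simp
qed

lemma card_grid_lattice7_le: "card (grid_lattice7 n) \<le> n * (n div 7 + 1)"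
proof -
  have "grid_lattice7 n \<subseteq> (\<Union>j<n. {i \<in> {..<n}. (i + 2 * j) mod 7 = 0} \<times> {j})"
    by (auto simp: grid_lattice7_def grid_V_def)
  then have "card (grid_lattice7 n) \<le> card (\<Union>j<n. {i \<in> {..<n}. (i + 2 * j) mod 7 = 0} \<times> {j})"
    by (rule card_mono[rotated]) simp
  also have "\<dots> \<le> (\<Sum>j<n. card ({i \<in> {..<n}. (i + 2 * j) mod 7 = 0} \<times> {j}))"
    by (rule card_UN_le) simp
  also have "\<dots> \<le> (\<Sum>j<n. n div 7 + 1)"
    using card_residue_class_lessThan_le[of n _ 7] by (intro sum_mono) (simp add: card_cartesian_product)
  finally show ?thesis by simp
qed

lemma card_grid_border_le: "card (grid_border w n) \<le> 4 * w * n"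
proof -
  let ?low = "{..<w} :: nat set" and ?high = "{n - w..<n}" and ?all = "{..<n}"
  have "card (grid_border w n) \<le> card ((?low \<times> ?all \<union> ?all \<times> ?low) \<union> (?high \<times> ?all \<union> ?all \<times> ?high))"
    by (rule card_mono) (auto simp: grid_border_def grid_V_def)
  also have "\<dots> \<le> (card (?low \<times> ?all) + card (?all \<times> ?low)) + (card (?high \<times> ?all) + card (?all \<times> ?high))"
    by (intro order_trans[OF card_Un_le] add_mono card_Un_le)
  also have "\<dots> = 2 * (card ?low * n) + 2 * (card ?high * n)"
    by (simp add: card_cartesian_product)
  also have "\<dots> \<le> 2 * (w * n) + 2 * (w * n)"
    by (intro add_mono mult_le_mono1 mult_le_mono2) auto
  finally show ?thesis by (simp add: ac_simps)
qed

lemma sum_lattice_cover_le: "(\<Sum>v\<in>grid_V n. lattice_cover n v) \<le> n * (n div 7 + 1) + 20 * n"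
proof -
  have "grid_V n \<inter> {v. v \<in> grid_lattice7 n \<union> grid_border 5 n} = grid_lattice7 n \<union> grid_border 5 n"
    by (auto simp: grid_lattice7_def grid_border_def)
  then have "(\<Sum>v\<in>grid_V n. lattice_cover n v) = card (grid_lattice7 n \<union> grid_border 5 n)"
    unfolding lattice_cover_def of_bool_def by (simp only: sum.If_cases finite_grid_V) simp
  also have "\<dots> \<le> card (grid_lattice7 n) + card (grid_border 5 n)"
    by (rule card_Un_le)
  also have "\<dots> \<le> n * (n div 7 + 1) + 20 * n"
    using card_grid_lattice7_le[of n] card_grid_border_le[of 5 n] by simp
  finally show ?thesis .
qed

lemma grid_decay_shift:
  assumes "\<bar>x\<bar> \<le> int a" "\<bar>y\<bar> \<le> int b"
  shows "grid_decay (a, b) (nat (int a + x), nat (int b + y)) = (1/2) ^ (nat \<bar>x\<bar> + nat \<bar>y\<bar>)"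
proof -
  have "absdiff a (nat (int a + x)) = nat \<bar>x\<bar>" "absdiff b (nat (int b + y)) = nat \<bar>y\<bar>"
    using assms by (auto simp: absdiff_def)
  then show ?thesis by (simp add: grid_decay_def)
qed

lemma shift_mem_grid_lattice7:
  assumes "\<bar>x\<bar> \<le> int a" "\<bar>y\<bar> \<le> int b" "int a + x < int n" "int b + y < int n"
    and "(int ((a + 2 * b) mod 7) + x + 2 * y) mod 7 = 0"
  shows "(nat (int a + x), nat (int b + y)) \<in> grid_lattice7 n"
proof -
  have "int ((nat (int a + x) + 2 * nat (int b + y)) mod 7) = (int (a + 2 * b) + (x + 2 * y)) mod 7"
    using assms(1,2) by (simp add: zmod_int algebra_simps)
  also have "\<dots> = (int (a + 2 * b) mod 7 + (x + 2 * y)) mod 7"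
    by (rule mod_add_left_eq[symmetric])
  also have "\<dots> = 0"
    using assms(5) by (simp only: zmod_int of_nat_numeral add.assoc)
  finally show ?thesis
    using assms(1-4) by (simp add: grid_lattice7_def grid_V_def nat_less_iff)
qed

text \<open>
Offsets are integer pairs \<open>(x, y)\<close> relative to the vertex \<open>(a, b)\<close>; the margin of 5 keeps every
shifted offset inside the grid and makes \<open>nat \<bar>x\<bar> + nat \<bar>y\<bar>\<close> its distance from \<open>(a, b)\<close>.
\<close>

lemma weight_lattice_cover_ge_offsets:
  assumes ab: "5 \<le> a" "a + 5 < n" "5 \<le> b" "b + 5 < n"
    and Off: "finite Off"
      "\<forall>(x, y)\<in>Off. \<bar>x\<bar> \<le> 5 \<and> \<bar>y\<bar> \<le> 5 \<and> (int ((a + 2 * b) mod 7) + x + 2 * y) mod 7 = 0"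
  shows "(\<Sum>(x, y)\<in>Off. (1/2::real) ^ (nat \<bar>x\<bar> + nat \<bar>y\<bar>))
    \<le> weight (grid_V n) (grid_E n) (lattice_cover n) (a, b)"
proof -
  define shift where "shift p = (nat (int a + fst p), nat (int b + snd p))" for p :: "int \<times> int"
  have box: "\<bar>x\<bar> \<le> int a" "\<bar>y\<bar> \<le> int b" "int a + x < int n" "int b + y < int n"
    and residue: "(int ((a + 2 * b) mod 7) + x + 2 * y) mod 7 = 0"
    if "(x, y) \<in> Off" for x y
    using Off(2) that ab by auto
  have inj: "inj_on shift Off"
  proof (rule inj_onI)
    fix p q assume "p \<in> Off" "q \<in> Off" "shift p = shift q"
    moreover obtain x y x' y' where "p = (x, y)" "q = (x', y')" by fastforce
    ultimately show "p = q"
      using box[of x y] box[of x' y'] by (auto simp: shift_def eq_nat_nat_iff)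
  qed
  have lattice: "shift p \<in> grid_lattice7 n" if "p \<in> Off" for p
    using shift_mem_grid_lattice7[OF box residue] that by (cases p) (simp add: shift_def)
  have "(\<Sum>(x, y)\<in>Off. (1/2::real) ^ (nat \<bar>x\<bar> + nat \<bar>y\<bar>))
      = (\<Sum>p\<in>Off. real (lattice_cover n (shift p)) * grid_decay (a, b) (shift p))"
    using lattice box by (intro sum.cong) (auto simp: lattice_cover_def shift_def grid_decay_shift)
  also have "\<dots> = (\<Sum>w\<in>shift ` Off. real (lattice_cover n w) * grid_decay (a, b) w)"
    by (simp add: sum.reindex[OF inj])
  also have "\<dots> \<le> weight (grid_V n) (grid_E n) (lattice_cover n) (a, b)"
  proof (rule weight_grid_ge_subset_sum)
    show "(a, b) \<in> grid_V n" using ab by (simp add: grid_V_def)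
    show "shift ` Off \<subseteq> grid_V n" using lattice by (auto simp: grid_lattice7_def)
  qed
  finally show ?thesis .
qed

lemma lattice_cover_covers: "covers (grid_V n) (grid_E n) (lattice_cover n)"
  unfolding covers_def
proof (intro ballI)
  fix u assume u: "u \<in> grid_V n"
  show "1 \<le> weight (grid_V n) (grid_E n) (lattice_cover n) u"
  proof (cases "u \<in> grid_lattice7 n \<union> grid_border 5 n")
    case True
    then show ?thesis
      using weight_grid_ge_subset_sum[OF u, of "{u}" "lattice_cover n"] u
      by (simp add: lattice_cover_def)
  next
    case False
    obtain a b where ab: "u = (a, b)" by fastforce
    with False u have margin: "5 \<le> a" "a + 5 < n" "5 \<le> b" "b + 5 < n"
      and "(a + 2 * b) mod 7 \<noteq> 0"
      by (auto simp: grid_lattice7_def grid_border_def grid_V_def)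
    have offsets: "1 \<le> weight (grid_V n) (grid_E n) (lattice_cover n) (a, b)"
      if "(a + 2 * b) mod 7 = r" "finite Off"
        "\<forall>(x, y)\<in>Off. \<bar>x\<bar> \<le> 5 \<and> \<bar>y\<bar> \<le> 5 \<and> (int r + x + 2 * y) mod 7 = 0"
        "1 \<le> (\<Sum>(x, y)\<in>Off. (1/2::real) ^ (nat \<bar>x\<bar> + nat \<bar>y\<bar>))" for r Off
      using weight_lattice_cover_ge_offsets[OF margin that(2)] that(1,3,4) by simp
    have "(a + 2 * b) mod 7 < 7" by simp
    with \<open>(a + 2 * b) mod 7 \<noteq> 0\<close>
    consider "(a + 2 * b) mod 7 = 1" | "(a + 2 * b) mod 7 = 2" | "(a + 2 * b) mod 7 = 3"
      | "(a + 2 * b) mod 7 = 4" | "(a + 2 * b) mod 7 = 5" | "(a + 2 * b) mod 7 = 6"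
      by linarith
    then have "1 \<le> weight (grid_V n) (grid_E n) (lattice_cover n) (a, b)"
    proof cases
      case 1
      show ?thesis
        by (rule offsets[OF 1, where Off = "{(-1, 0), (1, -1), (0, 3), (-3, 1), (0, -4)}"])
          (simp_all add: power_numeral_reduce)
    next
      case 2
      show ?thesis
        by (rule offsets[OF 2, where Off = "{(0, -1), (-2, 0), (1, 2), (-1, 3), (2, -2)}"])
          (simp_all add: power_numeral_reduce)
    next
      case 3
      show ?thesis
        by (rule offsets[OF 3, where Off = "{(-1, -1), (0, 2), (-3, 0), (1, -2), (2, 1), (4, 0), (-2, 3), (0, -5)}"])
          (simp_all add: power_numeral_reduce)
    next
      case 4
      show ?thesis
        by (rule offsets[OF 4, where Off = "{(0, -2), (1, 1), (-2, -1), (-1, 2), (3, 0), (-4, 0), (0, 5), (2, -3)}"])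
          (simp_all add: power_numeral_reduce)
    next
      case 5
      show ?thesis
        by (rule offsets[OF 5, where Off = "{(0, 1), (2, 0), (-1, -2), (-3, -1), (-2, 2)}"])
          (simp_all add: power_numeral_reduce)
    next
      case 6
      show ?thesis
        by (rule offsets[OF 6, where Off = "{(1, 0), (-1, 1), (0, -3), (-2, -2), (0, 4)}"])
          (simp_all add: power_numeral_reduce)
    qed
    then show ?thesis by (simp add: ab)
  qed
qed

section \<open>The covering ratio\<close>

lemma min_cover_size_le:
  "covers V E D \<Longrightarrow> min_cover_size V E \<le> (\<Sum>v\<in>V. D v)"
  unfolding min_cover_size_def by (rule Least_le) blast

lemma min_cover_size_attained:
  assumes "covers V E D"
  obtains D' where "covers V E D'" "(\<Sum>v\<in>V. D' v) = min_cover_size V E"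
  using LeastI_ex[of "\<lambda>s. \<exists>D. covers V E D \<and> (\<Sum>v\<in>V. D v) = s"] assms
  unfolding min_cover_size_def by blast

lemma min_cover_size_grid_ge: "real (n * n) \<le> 213/25 * real (min_cover_size (grid_V n) (grid_E n))"
proof -
  obtain D where "covers (grid_V n) (grid_E n) D" "(\<Sum>v\<in>grid_V n. D v) = min_cover_size (grid_V n) (grid_E n)"
    using min_cover_size_attained[OF lattice_cover_covers] .
  then show ?thesis using grid_cover_size_ge by metis
qed

lemma min_cover_size_grid_le:
  "real (min_cover_size (grid_V n) (grid_E n)) \<le> real n * real n / 7 + 21 * real n"
proof -
  have "min_cover_size (grid_V n) (grid_E n) \<le> n * (n div 7) + 21 * n"
    using order_trans[OF min_cover_size_le[OF lattice_cover_covers] sum_lattice_cover_le]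
    by (simp add: algebra_simps)
  then have "real (min_cover_size (grid_V n) (grid_E n)) \<le> real n * real (n div 7) + 21 * real n"
    using of_nat_mono[where 'a = real] by fastforce
  moreover have "real n * real (n div 7) \<le> real n * (real n / 7)"
    by (intro mult_left_mono) (simp_all add: le_divide_eq)
  ultimately show ?thesis by simp
qed

lemma seven_minus_le_ratio:
  fixes n m \<epsilon> :: real
  assumes "0 < m" "m \<le> n * n / 7 + 21 * n" "0 < \<epsilon>" "1029 \<le> \<epsilon> * n"
  shows "7 - \<epsilon> \<le> n * n / m"
proof -
  have "0 < \<epsilon> * n" using assms(4) by linarith
  then have "0 \<le> n" using assms(3) by (simp add: zero_less_mult_iff)
  have "(7 - \<epsilon>) * m \<le> n * n"
  proof (cases "\<epsilon> \<le> 7")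
    case True
    then have "(7 - \<epsilon>) * m \<le> (7 - \<epsilon>) * (n * n / 7 + 21 * n)"
      using assms(2) by (intro mult_left_mono) auto
    also have "\<dots> = n * n - n * (\<epsilon> * n - 1029) / 7 - 21 * (\<epsilon> * n)"
      by (simp add: field_simps)
    also have "\<dots> \<le> n * n"
      using mult_nonneg_nonneg[OF \<open>0 \<le> n\<close>, of "\<epsilon> * n - 1029"] assms(4) by linarith
    finally show ?thesis .
  next
    case False
    then have "(7 - \<epsilon>) * m \<le> 0" using assms(1) by (intro mult_nonpos_nonneg) auto
    then show ?thesis using zero_le_square[of n] by linarith
  qed
  then show ?thesis using assms(1) by (simp add: le_divide_eq)
qed

theorem mainTheorem4:
  fixes \<epsilon> :: real
  assumes "\<epsilon> > 0"
  shows "\<exists>N::nat. \<forall>n>N. 7 - \<epsilon> \<le> ifcov (grid_V n) (grid_E n)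
                         \<and> ifcov (grid_V n) (grid_E n) \<le> 213 / 25"
proof (intro exI allI impI conjI)
  fix n assume n: "nat \<lceil>1029 / \<epsilon>\<rceil> < n"
  define m where "m = min_cover_size (grid_V n) (grid_E n)"
  have ifcov: "ifcov (grid_V n) (grid_E n) = real n * real n / real m"
    by (simp add: ifcov_def m_def card_grid_V)
  have m_ge: "real n * real n \<le> 213/25 * real m"
    using min_cover_size_grid_ge[of n] by (simp add: m_def)
  have "1 \<le> real n" using n by simp
  then have "1 * 1 \<le> real n * real n" by (intro mult_mono) auto
  with m_ge have "0 < real m" by linarith
  with m_ge show "ifcov (grid_V n) (grid_E n) \<le> 213 / 25"
    by (simp add: ifcov divide_le_eq)
  have "1029 / \<epsilon> \<le> real n" using n by linarith
  then have "1029 \<le> \<epsilon> * real n" using assms by (simp add: divide_le_eq mult.commute)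
  with \<open>0 < real m\<close> show "7 - \<epsilon> \<le> ifcov (grid_V n) (grid_E n)"
    unfolding ifcov using min_cover_size_grid_le[of n] assms
    by (intro seven_minus_le_ratio) (simp_all add: m_def)
qed

end
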